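(* Let $\mathcal{T}$ be an MPQ-tree of an interval graph $G=(V,E)$, let $(x,y)\in E$ with $x$ over $y$ and $node(x)\neq node(y)$. If $node(y)$ is a Q-node, then $(x,y)$ is not an interval edge.
   Context: Graphs are finite and simple; for $G=(V,E)$ and $e\in E$, $G-e=(V,E\setminus\{e\})$. An edge $(x,y)\in E$ of an interval graph $G$ is an interval edge if $G-(x,y)$ is an interval graph. An MPQ-tree of an interval graph $G=(V,E)$, $V=\{1,\dots,n\}$, is a rooted plane tree whose nodes are P-nodes and Q-nodes. Each P-node carries a (possibly empty) set of vertices. A Q-node has $k\ge 3$ ordered positions $1,\dots,k$; position $i$ carries a set $S_i\subseteq V$ (the $i$-th section) and a child subtree $T_i$, which may be empty. Every vertex $v$ is assigned to exactly one node $node(v)$: either $v$ lies in the set of the P-node $node(v)$, or $node(v)$ is a Q-node and $v$ lies exactly in the sections $S_{l(v)},\dots,S_{r(v)}$ of it, with $l(v)<r(v)$. For a node with child subtrees $T_1,\dots,T_k$, $V_i$ denotes the set of vertices assigned to nodes of $T_i$ ($V_i=\emptyset$ if $T_i$ is empty). The maximal cliques of $G$ are in bijection with the descending paths from the root which at a P-node continue into one of its children (stopping if there is none) and at a Q-node choose a position $i$ and continue into $T_i$ (stopping if $T_i$ is empty); the clique is the union of the sets of the visited P-nodes and the chosen sections. Reading these cliques left to right gives a linear order of the maximal cliques, and the orders obtained this way after arbitrarily permuting children of P-nodes and reversing the positions of Q-nodes are exactly the orders of the maximal cliques of $G$ in which the cliques containing any fixed vertex are consecutive. Moreover, for every Q-node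 with sections $S_1,\dots,S_k$: (a) $V_1\neq\emptyset$ and $V_k\ne\emptyset$; (b) $S_1\subseteq S_2$ and $S_k\subseteq S_{k-1}$; (c) $S_{i-1}\cap S_i\neq\emptyset$ for $2\le i\le k$; (d) $S_{i-1}\neq S_i$ for $2\le i\le k$; (e) $(S_i\cap S_{i+1})\setminus S_1\neq\emptyset$ and $(S_{i-1}\cap S_i)\setminus S_k\neq\emptyset$ for $2\le i\le k-1$; (f) $(S_{i-1}\cup V_{i-1})\setminus S_i\neq\emptyset$ and $(S_i\cup V_i)\setminus S_{i-1}\neq\emptyset$ for $2\le i\le k$; and further (g) no empty P-node has an empty P-node as its parent, (h) no P-node has exactly one child whose root is a P-node, (i) every child subtree of a P-node is nonempty. We say $x$ is over $y$ if $node(x)$ is the lowest common ancestor of $node(x)$ and $node(y)$ in $\mathcal{T}$. *)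

theory Defs
  imports Complex_Main "HOL-Library.Sublist" "HOL-Library.Multiset"
begin

definition simple_graph :: "'v set \<Rightarrow> 'v set set \<Rightarrow> bool" where
  "simple_graph V E \<longleftrightarrow> finite V \<and>
     (\<forall>e\<in>E. \<exists>u v. e = {u, v} \<and> u \<noteq> v \<and> u \<in> V \<and> v \<in> V)"

definition interval_graph :: "'v set \<Rightarrow> 'v set set \<Rightarrow> bool" where
  "interval_graph V E \<longleftrightarrow> simple_graph V E \<and>
     (\<exists>l r :: 'v \<Rightarrow> real. (\<forall>v\<in>V. l v \<le> r v) \<and>
        (\<forall>u\<in>V. \<forall>v\<in>V. u \<noteq> v \<longrightarrow>
            ({u, v} \<in> E \<longleftrightarrow> max (l u) (l v) \<le> min (r u) (r v))))"

definition interval_edge :: "'v set \<Rightarrow> 'v set set \<Rightarrow> 'v set \<Rightarrow> bool" where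
  "interval_edge V E e \<longleftrightarrow> e \<in> E \<and> interval_graph V (E - {e})"

definition is_clique :: "'v set \<Rightarrow> 'v set set \<Rightarrow> 'v set \<Rightarrow> bool" where
  "is_clique V E C \<longleftrightarrow> C \<subseteq> V \<and> (\<forall>u\<in>C. \<forall>v\<in>C. u \<noteq> v \<longrightarrow> {u, v} \<in> E)"

definition max_cliques :: "'v set \<Rightarrow> 'v set set \<Rightarrow> 'v set set" where
  "max_cliques V E = {C. is_clique V E C \<and> (\<forall>D. is_clique V E D \<and> C \<subseteq> D \<longrightarrow> D = C)}"

text \<open>A Q-node carries the list of its positions; position i carries the section S_i and
a child subtree T_i, which may be empty (None).  Positions are indexed 0,...,k-1.\<close>

datatype 'v mpq = PNode "'v set" "'v mpq list" | QNode "('v set \<times> 'v mpq option) list"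

text \<open>Nodes of a tree are addressed by paths from the root (lists of child indices).\<close>

inductive at_path :: "'v mpq \<Rightarrow> nat list \<Rightarrow> 'v mpq \<Rightarrow> bool" where
  root: "at_path t [] t"
| pchild: "i < length cs \<Longrightarrow> at_path (cs ! i) p s \<Longrightarrow> at_path (PNode S cs) (i # p) s"
| qchild: "i < length qs \<Longrightarrow> snd (qs ! i) = Some c \<Longrightarrow> at_path c p s
            \<Longrightarrow> at_path (QNode qs) (i # p) s"

definition node_label :: "'v mpq \<Rightarrow> 'v set" where
  "node_label t = (case t of PNode S cs \<Rightarrow> S | QNode qs \<Rightarrow> \<Union> (fst ` set qs))"

definition tverts :: "'v mpq \<Rightarrow> 'v set" where
  "tverts t = \<Union> {node_label s | p s. at_path t p s}"

definition sub_verts :: "'v mpq option \<Rightarrow> 'v set" where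
  "sub_verts c = (case c of None \<Rightarrow> {} | Some t \<Rightarrow> tverts t)"

definition vnode :: "'v mpq \<Rightarrow> 'v \<Rightarrow> nat list \<Rightarrow> bool" where
  "vnode T v p \<longleftrightarrow> (\<exists>s. at_path T p s \<and> v \<in> node_label s)"

function cliques :: "'v mpq \<Rightarrow> 'v set list" where
  "cliques (PNode S cs) =
     (if cs = [] then [S] else map ((\<union>) S) (concat (map cliques cs)))"
| "cliques (QNode qs) =
     concat (map (\<lambda>p. case snd p of None \<Rightarrow> [fst p]
                                   | Some t \<Rightarrow> map ((\<union>) (fst p)) (cliques t)) qs)"
  by pat_completeness auto
termination
proof (relation "measure size", goal_cases)
  case 1 then show ?case by simp
next
  case (2 S cs x) then show ?case by (simp add: less_Suc_eq_le size_list_estimation')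
next
  case (3 qs x t)
  then obtain a where "(a, Some t) \<in> set qs" by (metis prod.collapse)
  then have "size_prod (\<lambda>_. 0) (size_option size) (a, Some t) \<le> size_list (size_prod (\<lambda>_. 0) (size_option size)) qs"
    by (rule size_list_estimation') simp
  then show ?case by simp
qed

inductive reorder :: "'v mpq \<Rightarrow> 'v mpq \<Rightarrow> bool" where
  P: "list_all2 reorder cs ds \<Longrightarrow> mset es = mset ds \<Longrightarrow> reorder (PNode S cs) (PNode S es)"
| Q: "list_all2 (\<lambda>a b. fst a = fst b \<and> rel_option reorder (snd a) (snd b)) qs rs
      \<Longrightarrow> qs' = rs \<or> qs' = rev rs \<Longrightarrow> reorder (QNode qs) (QNode qs')"
monos list.rel_mono option.rel_mono

definition consecutive_for :: "'v set list \<Rightarrow> 'v \<Rightarrow> bool" where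
  "consecutive_for L v \<longleftrightarrow>
     (\<forall>i j k. i \<le> j \<and> j \<le> k \<and> k < length L \<and> v \<in> L ! i \<and> v \<in> L ! k \<longrightarrow> v \<in> L ! j)"

text \<open>Conditions (a)-(f) on a Q-node (0-based positions 0..k-1), and k >= 3.\<close>

definition qnode_ok :: "('v set \<times> 'v mpq option) list \<Rightarrow> bool" where
  "qnode_ok qs \<longleftrightarrow>
    (let k = length qs; S = (\<lambda>i. fst (qs ! i)); W = (\<lambda>i. sub_verts (snd (qs ! i))) in
      k \<ge> 3 \<and>
      W 0 \<noteq> {} \<and> W (k - 1) \<noteq> {} \<and>
      S 0 \<subseteq> S 1 \<and> S (k - 1) \<subseteq> S (k - 2) \<and>
      (\<forall>i. 1 \<le> i \<and> i \<le> k - 1 \<longrightarrow> S (i - 1) \<inter> S i \<noteq> {}) \<and>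
      (\<forall>i. 1 \<le> i \<and> i \<le> k - 1 \<longrightarrow> S (i - 1) \<noteq> S i) \<and>
      (\<forall>i. 1 \<le> i \<and> i \<le> k - 2 \<longrightarrow>
           (S i \<inter> S (i + 1)) - S 0 \<noteq> {} \<and> (S (i - 1) \<inter> S i) - S (k - 1) \<noteq> {}) \<and>
      (\<forall>i. 1 \<le> i \<and> i \<le> k - 1 \<longrightarrow>
           (S (i - 1) \<union> W (i - 1)) - S i \<noteq> {} \<and> (S i \<union> W i) - S (i - 1) \<noteq> {}))"

definition mpq_tree_of :: "'v set \<Rightarrow> 'v set set \<Rightarrow> 'v mpq \<Rightarrow> bool" where
  "mpq_tree_of V E T \<longleftrightarrow>
     \<comment> \<open>vertex sets of nodes consist of vertices of G\<close>
     (\<forall>p s. at_path T p s \<longrightarrow> node_label s \<subseteq> V) \<and>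
     \<comment> \<open>every vertex is assigned to exactly one node\<close>
     (\<forall>v\<in>V. \<exists>!p. vnode T v p) \<and>
     \<comment> \<open>in a Q-node, a vertex lies exactly in sections l(v)..r(v) with l(v) < r(v)\<close>
     (\<forall>p qs v. at_path T p (QNode qs) \<and> v \<in> node_label (QNode qs) \<longrightarrow>
        (\<exists>l r. l < r \<and> r < length qs \<and>
           (\<forall>i < length qs. v \<in> fst (qs ! i) \<longleftrightarrow> l \<le> i \<and> i \<le> r))) \<and>
     \<comment> \<open>maximal cliques are in bijection with the descending paths\<close>
     distinct (cliques T) \<and> set (cliques T) = max_cliques V E \<and>
     \<comment> \<open>the clique orders of the reordered trees are exactly the consecutive orders\<close>
     {cliques T' | T'. reorder T T'} =
       {L. distinct L \<and> set L = max_cliques V E \<and> (\<forall>v. consecutive_for L v)} \<and>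
     \<comment> \<open>(a)-(f) for every Q-node\<close>
     (\<forall>p qs. at_path T p (QNode qs) \<longrightarrow> qnode_ok qs) \<and>
     \<comment> \<open>(g) no empty P-node has an empty P-node as parent\<close>
     (\<forall>p cs i ds. at_path T p (PNode {} cs) \<and> i < length cs \<and> cs ! i = PNode {} ds \<longrightarrow> False) \<and>
     \<comment> \<open>(h) no P-node has exactly one child whose root is a P-node\<close>
     (\<forall>p S c. at_path T p (PNode S [c]) \<longrightarrow> (\<forall>S' ds. c \<noteq> PNode S' ds))"
     \<comment> \<open>(i) holds by construction: children of P-nodes are (nonempty) trees\<close>

end

theory Submission
  imports Defs
begin

text \<open>Let \<open>y\<close> lie in the sections \<open>l, \<dots>, r\<close> of its Q-node. Condition (f) at the boundary
  between the sections \<open>l\<close> and \<open>l + 1\<close> yields a vertex \<open>a\<close> confined to the positions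
  \<open>\<le> l\<close> and a vertex \<open>b\<close> confined to the positions \<open>\<ge> l + 1\<close>; no maximal clique contains
  both, so \<open>a\<close> and \<open>b\<close> are not adjacent, whereas \<open>y\<close> is adjacent to both. A maximal clique
  through \<open>x\<close> and \<open>y\<close> splits into a part outside the subtree of the Q-node, which contains
  \<open>x\<close>, and a clique of that subtree; replacing the latter by cliques through \<open>a\<close> and
  through \<open>b\<close> shows that \<open>x\<close> is adjacent to \<open>a\<close> and \<open>b\<close>. So \<open>x a y b\<close> is a 4-cycle whose
  only chord is \<open>xy\<close>, and deleting \<open>xy\<close> leaves an induced 4-cycle, which no interval graph
  contains.\<close>

section \<open>Paths, vertices and cliques of MPQ-trees\<close>

lemma bex_set_conv_ex_nth: "(\<exists>x \<in> set xs. P x) \<longleftrightarrow> (\<exists>i<length xs. P (xs ! i))"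
  by (metis in_set_conv_nth)

lemma cliques_PNode_iff:
  "C \<in> set (cliques (PNode S cs)) \<longleftrightarrow>
     (cs = [] \<and> C = S) \<or> (\<exists>j<length cs. \<exists>D \<in> set (cliques (cs ! j)). C = S \<union> D)"
proof -
  have "C \<in> set (cliques (PNode S cs)) \<longleftrightarrow>
     (cs = [] \<and> C = S) \<or> (\<exists>c \<in> set cs. \<exists>D \<in> set (cliques c). C = S \<union> D)"
    by auto
  then show ?thesis
    unfolding bex_set_conv_ex_nth by auto
qed

lemma cliques_QNode_iff:
  "C \<in> set (cliques (QNode qs)) \<longleftrightarrow>
     (\<exists>j<length qs. (snd (qs ! j) = None \<and> C = fst (qs ! j)) \<or>
        (\<exists>t. snd (qs ! j) = Some t \<and> (\<exists>D \<in> set (cliques t). C = fst (qs ! j) \<union> D)))"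
proof -
  have "C \<in> set (case snd q of None \<Rightarrow> [fst q] | Some t \<Rightarrow> map ((\<union>) (fst q)) (cliques t)) \<longleftrightarrow>
     (snd q = None \<and> C = fst q) \<or> (\<exists>t. snd q = Some t \<and> (\<exists>D \<in> set (cliques t). C = fst q \<union> D))"
    for q :: "'a set \<times> 'a mpq option"
    by (cases "snd q") auto
  then have "C \<in> set (cliques (QNode qs)) \<longleftrightarrow> (\<exists>q \<in> set qs. (snd q = None \<and> C = fst q) \<or>
      (\<exists>t. snd q = Some t \<and> (\<exists>D \<in> set (cliques t). C = fst q \<union> D)))"
    by (simp only: cliques.simps set_concat set_map) simp
  then show ?thesis
    unfolding bex_set_conv_ex_nth .
qed

inductive_simps at_path_Nil_iff: "at_path t [] s"
inductive_simps at_path_PNode_Cons_iff: "at_path (PNode S cs) (i # p) s"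
inductive_simps at_path_QNode_Cons_iff: "at_path (QNode qs) (i # p) s"

lemma at_path_append: "at_path t p s \<Longrightarrow> at_path s q u \<Longrightarrow> at_path t (p @ q) u"
  by (induction rule: at_path.induct) (auto intro: at_path.intros)

lemma at_path_Cons_split: "at_path t (i # p) s \<Longrightarrow> \<exists>c. at_path t [i] c \<and> at_path c p s"
  by (cases t) (auto simp: at_path_PNode_Cons_iff at_path_QNode_Cons_iff intro: at_path.intros)

lemma at_path_unique: "at_path t p s \<Longrightarrow> at_path t p s' \<Longrightarrow> s' = s"
proof (induction p arbitrary: t)
  case Nil then show ?case by (simp add: at_path_Nil_iff)
next
  case (Cons i p) then show ?case by (cases t) (auto simp: at_path_PNode_Cons_iff at_path_QNode_Cons_iff)
qed

lemma at_path_PNode_single_iff: "at_path (PNode S cs) [i] c \<longleftrightarrow> i < length cs \<and> c = cs ! i"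
  by (auto simp: at_path_PNode_Cons_iff at_path_Nil_iff)

lemma at_path_QNode_single_iff: "at_path (QNode qs) [i] c \<longleftrightarrow> i < length qs \<and> snd (qs ! i) = Some c"
  by (auto simp: at_path_QNode_Cons_iff at_path_Nil_iff)

lemma node_label_subset_tverts: "node_label t \<subseteq> tverts t"
  unfolding tverts_def by (auto intro: at_path.root)

lemma tvertsI: "at_path t q u \<Longrightarrow> v \<in> node_label u \<Longrightarrow> v \<in> tverts t"
  unfolding tverts_def by auto

lemma tvertsE:
  assumes "v \<in> tverts t"
  obtains q u where "at_path t q u" "v \<in> node_label u"
  using assms unfolding tverts_def by auto

lemma tverts_at_path:
  assumes "at_path t p c" "v \<in> tverts c"
  obtains q u where "at_path t (p @ q) u" "v \<in> node_label u"
  using assms by (meson at_path_append tvertsE)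

lemma tverts_mono_at_path: "at_path t p c \<Longrightarrow> tverts c \<subseteq> tverts t"
  by (meson subsetI tverts_at_path tvertsI)

lemma cliques_subset_tverts: "C \<in> set (cliques t) \<Longrightarrow> C \<subseteq> tverts t"
proof (induction t arbitrary: C rule: cliques.induct)
  case (1 S cs)
  have S: "S \<subseteq> tverts (PNode S cs)"
    using node_label_subset_tverts[of "PNode S cs"] by (simp add: node_label_def)
  from "1.prems" consider "C = S" | j D where "j < length cs" "D \<in> set (cliques (cs ! j))" "C = S \<union> D"
    unfolding cliques_PNode_iff by blast
  then show ?case
  proof cases
    case (2 j D)
    then have "D \<subseteq> tverts (cs ! j)" using "1.IH" by (metis list.size(3) not_less0 nth_mem)
    also have "\<dots> \<subseteq> tverts (PNode S cs)"
      using \<open>j < length cs\<close> by (intro tverts_mono_at_path[of _ "[j]"]) (simp add: at_path_PNode_single_iff)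
    finally show ?thesis using S \<open>C = S \<union> D\<close> by blast
  qed (use S in blast)
next
  case (2 qs)
  from "2.prems" obtain j where j: "j < length qs" and
    "(snd (qs ! j) = None \<and> C = fst (qs ! j)) \<or>
     (\<exists>c. snd (qs ! j) = Some c \<and> (\<exists>D \<in> set (cliques c). C = fst (qs ! j) \<union> D))"
    unfolding cliques_QNode_iff by blast
  moreover have S: "fst (qs ! j) \<subseteq> tverts (QNode qs)"
    using j node_label_subset_tverts[of "QNode qs"] by (force simp: node_label_def)
  moreover have "D \<subseteq> tverts (QNode qs)"
    if "snd (qs ! j) = Some c" "D \<in> set (cliques c)" for c D
  proof -
    have "D \<subseteq> tverts c" using "2.IH"[OF nth_mem[OF j]] that by blast
    also have "\<dots> \<subseteq> tverts (QNode qs)"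
      using j that by (intro tverts_mono_at_path[of _ "[j]"]) (simp add: at_path_QNode_single_iff)
    finally show ?thesis .
  qed
  ultimately show ?case by blast
qed

definition outside_verts :: "'v mpq \<Rightarrow> nat list \<Rightarrow> 'v set" where
  "outside_verts t p = {v. \<exists>q u. at_path t q u \<and> \<not> prefix p q \<and> v \<in> node_label u}"

lemma node_label_subset_outside_verts: "node_label t \<subseteq> outside_verts t (i # p)"
  unfolding outside_verts_def using at_path.root by fastforce

lemma outside_verts_Cons_mono: "outside_verts t [i] \<subseteq> outside_verts t (i # p)"
proof -
  have "prefix (i # p) q \<Longrightarrow> prefix [i] q" for q :: "nat list"
    by (cases q) auto
  then show ?thesis
    unfolding outside_verts_def by blast
qed

lemma outside_verts_child:
  assumes "at_path t [i] c"
  shows "outside_verts c p \<subseteq> outside_verts t (i # p)"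
proof
  fix v assume "v \<in> outside_verts c p"
  then obtain q u where "at_path c q u" "\<not> prefix p q" "v \<in> node_label u"
    unfolding outside_verts_def by blast
  moreover from this have "at_path t (i # q) u"
    using at_path_append[OF assms] by fastforce
  ultimately show "v \<in> outside_verts t (i # p)"
    unfolding outside_verts_def by fastforce
qed

lemma tverts_sibling_subset_outside_verts:
  assumes "at_path t [j] c" "j \<noteq> i"
  shows "tverts c \<subseteq> outside_verts t (i # p)"
proof
  fix v assume "v \<in> tverts c"
  then obtain q u where "at_path t (j # q) u" "v \<in> node_label u"
    using assms(1) by (auto elim: tverts_at_path)
  moreover have "\<not> prefix (i # p) (j # q)" using assms(2) by simp
  ultimately show "v \<in> outside_verts t (i # p)"
    unfolding outside_verts_def by blast
qed

text \<open>The vertices of node \<open>t\<close> that are added to every clique read off through its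
  \<open>i\<close>-th child.\<close>

definition child_section :: "'v mpq \<Rightarrow> nat \<Rightarrow> 'v set" where
  "child_section t i = (case t of PNode S cs \<Rightarrow> S | QNode qs \<Rightarrow> fst (qs ! i))"

lemma child_section_subset_node_label:
  "at_path t [i] c \<Longrightarrow> child_section t i \<subseteq> node_label t"
  by (cases t) (force simp: child_section_def node_label_def at_path_QNode_single_iff)+

lemma cliques_through_child:
  assumes "at_path t [i] c" "D \<in> set (cliques c)"
  shows "child_section t i \<union> D \<in> set (cliques t)"
proof (cases t)
  case (PNode S cs)
  then have "i < length cs" "c = cs ! i" using assms(1) by (simp_all add: at_path_PNode_single_iff)
  then show ?thesis
    using assms(2) unfolding PNode cliques_PNode_iff child_section_def by auto
next
  case (QNode qs)
  then have "i < length qs" "snd (qs ! i) = Some c" using assms(1) by (simp_all add: at_path_QNode_single_iff)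
  then show ?thesis
    using assms(2) unfolding QNode cliques_QNode_iff child_section_def by auto
qed

lemma clique_cases:
  assumes "C \<in> set (cliques t)"
  shows "C \<subseteq> node_label t \<or>
    (\<exists>j c D. at_path t [j] c \<and> D \<in> set (cliques c) \<and> C = child_section t j \<union> D)"
proof (cases t)
  case (PNode S cs)
  then show ?thesis
    using assms unfolding PNode cliques_PNode_iff
    by (auto simp: child_section_def node_label_def at_path_PNode_single_iff)
next
  case (QNode qs)
  from assms obtain j where j: "j < length qs" and
    "(snd (qs ! j) = None \<and> C = fst (qs ! j)) \<or>
     (\<exists>c. snd (qs ! j) = Some c \<and> (\<exists>D \<in> set (cliques c). C = fst (qs ! j) \<union> D))"
    unfolding QNode cliques_QNode_iff by blast
  then show ?thesis
    unfolding QNode by (force simp: child_section_def node_label_def at_path_QNode_single_iff)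
qed

lemma clique_split_at_child:
  assumes "at_path t [i] c" "C \<in> set (cliques t)"
  shows "(\<exists>D \<in> set (cliques c). C = child_section t i \<union> D) \<or> C \<subseteq> outside_verts t [i]"
proof -
  have label: "node_label t \<subseteq> outside_verts t [i]"
    by (rule node_label_subset_outside_verts)
  from clique_cases[OF assms(2)] show ?thesis
  proof (elim disjE exE conjE)
    fix j c' D assume j: "at_path t [j] c'" "D \<in> set (cliques c')" "C = child_section t j \<union> D"
    show ?thesis
    proof (cases "j = i")
      case True
      then have "c' = c" using j(1) assms(1) by (blast intro: at_path_unique)
      then show ?thesis using True j by blast
    next
      case False
      have "D \<subseteq> tverts c'" using j(2) by (rule cliques_subset_tverts)
      also have "\<dots> \<subseteq> outside_verts t [i]"
        using j(1) False by (rule tverts_sibling_subset_outside_verts)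
      finally show ?thesis
        using j child_section_subset_node_label[OF j(1)] label by blast
    qed
  qed (use label in blast)
qed

lemma clique_split_at_path:
  assumes "at_path t p s" "C \<in> set (cliques t)"
  shows "(\<exists>A \<subseteq> outside_verts t p. \<exists>D \<in> set (cliques s). C = A \<union> D \<and>
            (\<forall>D' \<in> set (cliques s). A \<union> D' \<in> set (cliques t))) \<or>
         C \<subseteq> outside_verts t p"
  using assms
proof (induction p arbitrary: t C)
  case Nil
  then have "s = t" by (simp add: at_path_Nil_iff)
  then have "{} \<subseteq> outside_verts t [] \<and> C \<in> set (cliques s) \<and> C = {} \<union> C \<and>
      (\<forall>D' \<in> set (cliques s). {} \<union> D' \<in> set (cliques t))"
    using Nil.prems(2) by simp
  then show ?case by blast
next
  case (Cons i p)
  obtain c where c: "at_path t [i] c" "at_path c p s"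
    using at_path_Cons_split[OF Cons.prems(1)] by blast
  have sec: "child_section t i \<subseteq> outside_verts t (i # p)"
    using child_section_subset_node_label[OF c(1)] node_label_subset_outside_verts by (rule order_trans)
  have child: "outside_verts c p \<subseteq> outside_verts t (i # p)"
    using c(1) by (rule outside_verts_child)
  from clique_split_at_child[OF c(1) Cons.prems(2)] show ?case
  proof (elim disjE bexE)
    fix D assume D: "D \<in> set (cliques c)" "C = child_section t i \<union> D"
    from Cons.IH[OF c(2) D(1)] show ?thesis
    proof (elim disjE exE conjE bexE)
      fix A D0 assume A: "A \<subseteq> outside_verts c p" "D0 \<in> set (cliques s)" "D = A \<union> D0"
        and ext: "\<forall>D' \<in> set (cliques s). A \<union> D' \<in> set (cliques c)"
      let ?A = "child_section t i \<union> A"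
      have "?A \<subseteq> outside_verts t (i # p)" using A(1) sec child by blast
      moreover have "C = ?A \<union> D0" using D(2) A(3) by blast
      moreover have "\<forall>D' \<in> set (cliques s). ?A \<union> D' \<in> set (cliques t)"
        using ext cliques_through_child[OF c(1)] by (simp add: Un_assoc)
      ultimately show ?thesis using A(2) by (intro disjI1 exI[of _ ?A] conjI bexI[of _ D0])
    next
      assume "D \<subseteq> outside_verts c p"
      then have "C \<subseteq> outside_verts t (i # p)" using D(2) sec child by blast
      then show ?thesis by (rule disjI2)
    qed
  next
    assume "C \<subseteq> outside_verts t [i]"
    then have "C \<subseteq> outside_verts t (i # p)" using outside_verts_Cons_mono by (rule order_trans)
    then show ?thesis by (rule disjI2)
  qed
qed

text \<open>The datatype admits Q-nodes without positions; they have no cliques.\<close>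

definition no_empty_qnode :: "'v mpq \<Rightarrow> bool" where
  "no_empty_qnode t \<longleftrightarrow> (\<forall>p qs. at_path t p (QNode qs) \<longrightarrow> qs \<noteq> [])"

lemma no_empty_qnode_at_path: "at_path t p s \<Longrightarrow> no_empty_qnode t \<Longrightarrow> no_empty_qnode s"
  unfolding no_empty_qnode_def using at_path_append by blast

lemma cliques_nonempty: "no_empty_qnode t \<Longrightarrow> set (cliques t) \<noteq> {}"
proof (induction t rule: cliques.induct)
  case (1 S cs)
  show ?case
  proof (cases cs)
    case (Cons c cs')
    have "at_path (PNode S cs) [0] c" using Cons by (simp add: at_path_PNode_single_iff)
    then have "set (cliques c) \<noteq> {}"
      using "1.IH" "1.prems" Cons no_empty_qnode_at_path by fastforce
    then show ?thesis using Cons by auto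
  qed simp
next
  case (2 qs)
  then obtain q qs' where qs: "qs = q # qs'"
    unfolding no_empty_qnode_def by (metis at_path.root list.exhaust)
  show ?case
  proof (cases "snd q")
    case (Some c)
    have "at_path (QNode qs) [0] c" using qs Some by (simp add: at_path_QNode_single_iff)
    then have "set (cliques c) \<noteq> {}"
      using "2.IH" "2.prems" qs Some no_empty_qnode_at_path by fastforce
    then show ?thesis using qs Some by auto
  qed (simp add: qs)
qed

lemma section_in_clique:
  assumes "no_empty_qnode (QNode qs)" "j < length qs"
  obtains C where "C \<in> set (cliques (QNode qs))" "fst (qs ! j) \<subseteq> C"
proof (cases "snd (qs ! j)")
  case None
  then have "fst (qs ! j) \<in> set (cliques (QNode qs))"
    using assms(2) unfolding cliques_QNode_iff by blast
  then show ?thesis using that by blast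
next
  case (Some c)
  then have "at_path (QNode qs) [j] c" using assms(2) by (simp add: at_path_QNode_single_iff)
  then have "no_empty_qnode c" using assms(1) by (rule no_empty_qnode_at_path)
  then obtain D where "D \<in> set (cliques c)"
    using cliques_nonempty by (meson ex_in_conv)
  then have "fst (qs ! j) \<union> D \<in> set (cliques (QNode qs))"
    using assms(2) Some unfolding cliques_QNode_iff by blast
  then show ?thesis using that by blast
qed

lemma node_label_vertex_in_clique:
  assumes "no_empty_qnode t" "v \<in> node_label t"
  obtains C where "C \<in> set (cliques t)" "v \<in> C"
proof (cases t)
  case (PNode S cs)
  obtain C where "C \<in> set (cliques t)" using cliques_nonempty[OF assms(1)] by (meson ex_in_conv)
  moreover have "S \<subseteq> C" using calculation unfolding PNode cliques_PNode_iff by blast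
  ultimately show ?thesis using that assms(2) PNode by (auto simp: node_label_def)
next
  case (QNode qs)
  then obtain j where "j < length qs" "v \<in> fst (qs ! j)"
    using assms(2) by (auto simp: node_label_def in_set_conv_nth)
  then show ?thesis using section_in_clique[of qs j] that assms(1) QNode by blast
qed

lemma clique_extends_along_path:
  assumes "at_path t p s" "D \<in> set (cliques s)"
  obtains C where "C \<in> set (cliques t)" "D \<subseteq> C"
  using assms
proof (induction p arbitrary: t thesis)
  case Nil
  then show ?case by (auto simp: at_path_Nil_iff)
next
  case (Cons i p)
  obtain c where c: "at_path t [i] c" "at_path c p s"
    using at_path_Cons_split[OF Cons.prems(2)] by blast
  obtain C' where "C' \<in> set (cliques c)" "D \<subseteq> C'"
    using Cons.IH[OF _ c(2) Cons.prems(3)] by blast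
  then show ?case
    using Cons.prems(1) cliques_through_child[OF c(1)] by blast
qed

lemma vertex_in_clique:
  assumes "no_empty_qnode t" "v \<in> tverts t"
  obtains C where "C \<in> set (cliques t)" "v \<in> C"
proof -
  obtain q u where u: "at_path t q u" "v \<in> node_label u"
    using assms(2) by (rule tvertsE)
  obtain D where "D \<in> set (cliques u)" "v \<in> D"
    using node_label_vertex_in_clique[OF no_empty_qnode_at_path[OF u(1) assms(1)] u(2)] .
  then show ?thesis
    using clique_extends_along_path[OF u(1)] that by blast
qed

text \<open>\<open>S\<^sub>i \<union> V\<^sub>i\<close> in the notation of conditions (a)--(f).\<close>

definition position_verts :: "('v set \<times> 'v mpq option) list \<Rightarrow> nat \<Rightarrow> 'v set" where
  "position_verts qs i = fst (qs ! i) \<union> sub_verts (snd (qs ! i))"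

lemma position_verts_subset_tverts:
  assumes "i < length qs"
  shows "position_verts qs i \<subseteq> tverts (QNode qs)"
proof -
  have "fst (qs ! i) \<subseteq> tverts (QNode qs)"
    using assms node_label_subset_tverts[of "QNode qs"] by (force simp: node_label_def)
  moreover have "tverts c \<subseteq> tverts (QNode qs)" if "snd (qs ! i) = Some c" for c
    using assms that by (intro tverts_mono_at_path[of _ "[i]"]) (simp add: at_path_QNode_single_iff)
  ultimately show ?thesis
    unfolding position_verts_def sub_verts_def by (auto split: option.split)
qed

lemma clique_of_QNode_within_position:
  assumes "D \<in> set (cliques (QNode qs))"
  obtains i where "i < length qs" "D \<subseteq> position_verts qs i"
proof -
  from assms obtain i where i: "i < length qs" and
    "(snd (qs ! i) = None \<and> D = fst (qs ! i)) \<or>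
     (\<exists>c. snd (qs ! i) = Some c \<and> (\<exists>D' \<in> set (cliques c). D = fst (qs ! i) \<union> D'))"
    unfolding cliques_QNode_iff by blast
  then have "D \<subseteq> position_verts qs i"
    using cliques_subset_tverts unfolding position_verts_def sub_verts_def by fastforce
  then show ?thesis using i that by blast
qed

lemma clique_of_QNode_through_position:
  assumes "no_empty_qnode (QNode qs)" "i < length qs" "v \<in> position_verts qs i"
  obtains D where "D \<in> set (cliques (QNode qs))" "fst (qs ! i) \<subseteq> D" "v \<in> D"
proof (cases "snd (qs ! i)")
  case None
  then have "fst (qs ! i) \<in> set (cliques (QNode qs))" "v \<in> fst (qs ! i)"
    using assms(2,3) unfolding cliques_QNode_iff position_verts_def sub_verts_def by auto
  then show ?thesis using that by blast
next
  case (Some c)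
  then have "at_path (QNode qs) [i] c" using assms(2) by (simp add: at_path_QNode_single_iff)
  then have c: "no_empty_qnode c" using assms(1) by (rule no_empty_qnode_at_path)
  obtain D where D: "D \<in> set (cliques c)" "v \<in> fst (qs ! i) \<union> D"
  proof (cases "v \<in> tverts c")
    case True
    then show ?thesis using vertex_in_clique[OF c] that by blast
  next
    case False
    then have "v \<in> fst (qs ! i)" using assms(3) Some by (simp add: position_verts_def sub_verts_def)
    moreover obtain D where "D \<in> set (cliques c)" using cliques_nonempty[OF c] by (meson ex_in_conv)
    ultimately show ?thesis using that by blast
  qed
  have "fst (qs ! i) \<union> D \<in> set (cliques (QNode qs))"
    using assms(2) Some D(1) unfolding cliques_QNode_iff by blast
  then show ?thesis using that D(2) by blast
qed

lemma section_vnode: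
  "at_path t p (QNode qs) \<Longrightarrow> i < length qs \<Longrightarrow> v \<in> fst (qs ! i) \<Longrightarrow> vnode t v p"
  unfolding vnode_def node_label_def by force

lemma sub_verts_vnode:
  assumes "at_path t p (QNode qs)" "i < length qs" "v \<in> sub_verts (snd (qs ! i))"
  obtains q where "vnode t v (p @ i # q)"
proof -
  obtain c where c: "snd (qs ! i) = Some c" "v \<in> tverts c"
    using assms(3) by (auto simp: sub_verts_def split: option.splits)
  then have "at_path t (p @ [i]) c"
    using assms(1,2) at_path_append by (fastforce simp: at_path_QNode_single_iff)
  then obtain q u where "at_path t ((p @ [i]) @ q) u" "v \<in> node_label u"
    using c(2) by (rule tverts_at_path)
  then show ?thesis using that unfolding vnode_def by fastforce
qed

section \<open>Interval graphs\<close>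

lemma simple_graph_edgeD:
  assumes "simple_graph V E" "{u, v} \<in> E"
  shows "u \<noteq> v" "u \<in> V" "v \<in> V"
  using assms unfolding simple_graph_def by (metis doubleton_eq_iff)+

lemma clique_subset_max_clique:
  assumes "finite V" "is_clique V E C"
  obtains M where "M \<in> max_cliques V E" "C \<subseteq> M"
  using assms(2)
proof (induction "card (V - C)" arbitrary: C thesis rule: less_induct)
  case less
  show ?case
  proof (cases "C \<in> max_cliques V E")
    case False
    then obtain D where D: "is_clique V E D" "C \<subseteq> D" "D \<noteq> C"
      using less.prems(2) unfolding max_cliques_def by blast
    then have "V - D \<subset> V - C"
      using less.prems(2) unfolding is_clique_def by blast
    then have "card (V - D) < card (V - C)"
      using assms(1) by (meson finite_Diff psubset_card_mono)
    then show ?thesis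
    proof (rule less.hyps[OF _ _ D(1)])
      fix M assume "M \<in> max_cliques V E" "D \<subseteq> M"
      then show thesis using less.prems(1) D(2) by blast
    qed
  qed (use less.prems in blast)
qed

text \<open>In an interval model the intervals of \<open>a\<close> and \<open>b\<close> both cover the gap between the
  disjoint intervals of \<open>x\<close> and \<open>y\<close>, so they meet.\<close>

lemma interval_graph_no_induced_C4:
  assumes "interval_graph V E"
    and "{x, a} \<in> E" "{a, y} \<in> E" "{y, b} \<in> E" "{b, x} \<in> E"
    and "{x, y} \<notin> E" "{a, b} \<notin> E" "x \<noteq> y" "a \<noteq> b"
  shows False
proof -
  obtain l r :: "_ \<Rightarrow> real"
    where adj: "\<And>u v. u \<in> V \<Longrightarrow> v \<in> V \<Longrightarrow> u \<noteq> v \<Longrightarrow>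
                  {u, v} \<in> E \<longleftrightarrow> max (l u) (l v) \<le> min (r u) (r v)"
    and G: "simple_graph V E"
    using assms(1) unfolding interval_graph_def by blast
  note edge = simple_graph_edgeD[OF G]
  have V: "x \<in> V" "a \<in> V" "y \<in> V" "b \<in> V"
    using edge(2,3)[OF assms(2)] edge(2,3)[OF assms(4)] by simp_all
  have "max (l x) (l a) \<le> min (r x) (r a)"
    using adj[OF V(1,2) edge(1)[OF assms(2)]] assms(2) by simp
  moreover have "max (l a) (l y) \<le> min (r a) (r y)"
    using adj[OF V(2,3) edge(1)[OF assms(3)]] assms(3) by simp
  moreover have "max (l y) (l b) \<le> min (r y) (r b)"
    using adj[OF V(3,4) edge(1)[OF assms(4)]] assms(4) by simp
  moreover have "max (l b) (l x) \<le> min (r b) (r x)"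
    using adj[OF V(4,1) edge(1)[OF assms(5)]] assms(5) by simp
  moreover have "\<not> max (l x) (l y) \<le> min (r x) (r y)"
    using adj[OF V(1,3) assms(8)] assms(6) by simp
  moreover have "\<not> max (l a) (l b) \<le> min (r a) (r b)"
    using adj[OF V(2,4) assms(9)] assms(7) by simp
  ultimately show False
    unfolding max_def min_def by (auto split: if_splits)
qed

section \<open>MPQ-trees of a graph\<close>

context
  fixes V :: "'v set" and E :: "'v set set" and T :: "'v mpq"
  assumes mpq: "mpq_tree_of V E T"
begin

lemma mpq_node_label_subset: "at_path T p s \<Longrightarrow> node_label s \<subseteq> V"
proof -
  have "\<forall>p s. at_path T p s \<longrightarrow> node_label s \<subseteq> V"
    using mpq unfolding mpq_tree_of_def by (elim conjE)
  then show "at_path T p s \<Longrightarrow> node_label s \<subseteq> V" by blast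
qed

lemma mpq_vnode_in_V: "vnode T v p \<Longrightarrow> v \<in> V"
  unfolding vnode_def using mpq_node_label_subset by blast

lemma mpq_vnode_unique: "vnode T v p \<Longrightarrow> vnode T v p' \<Longrightarrow> p' = p"
proof -
  have "\<forall>v\<in>V. \<exists>!p. vnode T v p"
    using mpq unfolding mpq_tree_of_def by (elim conjE)
  then show "vnode T v p \<Longrightarrow> vnode T v p' \<Longrightarrow> p' = p"
    using mpq_vnode_in_V by blast
qed

lemma mpq_section_interval:
  assumes "at_path T p (QNode qs)" "v \<in> node_label (QNode qs)"
  obtains l r where "l < r" "r < length qs" "\<And>i. i < length qs \<Longrightarrow> v \<in> fst (qs ! i) \<longleftrightarrow> l \<le> i \<and> i \<le> r"
proof -
  have "\<forall>p qs v. at_path T p (QNode qs) \<and> v \<in> node_label (QNode qs) \<longrightarrow>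
        (\<exists>l r. l < r \<and> r < length qs \<and> (\<forall>i < length qs. v \<in> fst (qs ! i) \<longleftrightarrow> l \<le> i \<and> i \<le> r))"
    using mpq unfolding mpq_tree_of_def by (elim conjE)
  then show ?thesis using assms that by blast
qed

lemma mpq_cliques: "set (cliques T) = max_cliques V E"
  using mpq unfolding mpq_tree_of_def by (elim conjE)

lemma mpq_qnode_ok: "at_path T p (QNode qs) \<Longrightarrow> qnode_ok qs"
proof -
  have "\<forall>p qs. at_path T p (QNode qs) \<longrightarrow> qnode_ok qs"
    using mpq unfolding mpq_tree_of_def by (elim conjE)
  then show "at_path T p (QNode qs) \<Longrightarrow> qnode_ok qs" by blast
qed

lemma mpq_no_empty_qnode: "no_empty_qnode T"
  unfolding no_empty_qnode_def using mpq_qnode_ok by (fastforce simp: qnode_ok_def Let_def)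

lemma mpq_clique_edge: "C \<in> set (cliques T) \<Longrightarrow> u \<in> C \<Longrightarrow> v \<in> C \<Longrightarrow> u \<noteq> v \<Longrightarrow> {u, v} \<in> E"
  using mpq_cliques unfolding max_cliques_def is_clique_def by blast

lemma mpq_edge_in_clique:
  assumes "finite V" "u \<in> V" "v \<in> V" "{u, v} \<in> E"
  obtains C where "C \<in> set (cliques T)" "u \<in> C" "v \<in> C"
proof -
  have "is_clique V E {u, v}"
    using assms(2-4) unfolding is_clique_def by (auto simp: insert_commute)
  then obtain M where "M \<in> max_cliques V E" "{u, v} \<subseteq> M"
    using assms(1) clique_subset_max_clique by blast
  then show ?thesis using that mpq_cliques by blast
qed

lemma mpq_tverts_vnode:
  assumes "at_path T p s" "v \<in> tverts s"
  obtains q where "vnode T v (p @ q)"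
  using assms unfolding vnode_def by (meson tverts_at_path)

lemma mpq_tverts_subset: "at_path T p s \<Longrightarrow> tverts s \<subseteq> V"
  by (meson mpq_tverts_vnode mpq_vnode_in_V subsetI)

lemma mpq_subtree_disjoint_outside:
  assumes "at_path T p s"
  shows "tverts s \<inter> outside_verts T p = {}"
proof -
  have False if v: "v \<in> tverts s" "v \<in> outside_verts T p" for v
  proof -
    obtain q where q: "vnode T v (p @ q)" using mpq_tverts_vnode[OF assms v(1)] .
    obtain q' u where "at_path T q' u" "\<not> prefix p q'" "v \<in> node_label u"
      using v(2) unfolding outside_verts_def by blast
    then have "vnode T v q'" unfolding vnode_def by blast
    then have "q' = p @ q" by (rule mpq_vnode_unique[OF q])
    then show False using \<open>\<not> prefix p q'\<close> by simp
  qed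
  then show ?thesis by blast
qed

lemma mpq_above_not_in_subtree:
  assumes "vnode T x px" "strict_prefix px p" "at_path T p s"
  shows "x \<notin> tverts s"
proof
  assume "x \<in> tverts s"
  then obtain q where "vnode T x (p @ q)" using mpq_tverts_vnode[OF assms(3)] by blast
  then have "px = p @ q" using mpq_vnode_unique assms(1) by blast
  then show False using prefix_length_less[OF assms(2)] by simp
qed

lemma mpq_position_verts_cases:
  assumes "at_path T p (QNode qs)" "i < length qs" "v \<in> position_verts qs i"
  obtains "v \<in> fst (qs ! i)" "vnode T v p" | q where "vnode T v (p @ i # q)"
proof (cases "v \<in> fst (qs ! i)")
  case True
  then show ?thesis using that(1) section_vnode[OF assms(1,2)] by blast
next
  case False
  then have "v \<in> sub_verts (snd (qs ! i))" using assms(3) by (simp add: position_verts_def)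
  then show ?thesis using that(2) sub_verts_vnode[OF assms(1,2)] by blast
qed

text \<open>As every vertex sits at a single node, a vertex of two different positions of a Q-node
  cannot live in their subtrees; so it belongs to the Q-node itself.\<close>

lemma mpq_position_verts_in_section:
  assumes Q: "at_path T p (QNode qs)" and ij: "i < length qs" "j < length qs" "i \<noteq> j"
    and v: "v \<in> position_verts qs i" "v \<in> position_verts qs j"
  shows "v \<in> fst (qs ! i)"
proof (rule ccontr)
  assume "v \<notin> fst (qs ! i)"
  then obtain q where q: "vnode T v (p @ i # q)"
    using mpq_position_verts_cases[OF Q ij(1) v(1)] by blast
  show False
  proof (cases rule: mpq_position_verts_cases[OF Q ij(2) v(2)])
    case 1
    then have "p = p @ i # q" by (intro mpq_vnode_unique[OF q])
    then show False by simp
  next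
    case (2 q')
    then have "p @ j # q' = p @ i # q" by (intro mpq_vnode_unique[OF q])
    then show False using ij(3) by simp
  qed
qed

lemma mpq_position_verts_interval:
  assumes Q: "at_path T p (QNode qs)" and ij: "i < j" "j < length qs"
    and v: "v \<in> position_verts qs i" "v \<in> position_verts qs j"
    and k: "i \<le> k" "k \<le> j"
  shows "v \<in> fst (qs ! k)"
proof -
  have sections: "v \<in> fst (qs ! i)" "v \<in> fst (qs ! j)"
    using mpq_position_verts_in_section[OF Q _ _ _ v(1) v(2)]
      mpq_position_verts_in_section[OF Q _ _ _ v(2) v(1)] ij by simp_all
  then have "v \<in> node_label (QNode qs)"
    using ij by (force simp: node_label_def)
  then obtain l r where lr: "\<And>m. m < length qs \<Longrightarrow> v \<in> fst (qs ! m) \<longleftrightarrow> l \<le> m \<and> m \<le> r"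
    using mpq_section_interval[OF Q] by blast
  have "l \<le> k" "k \<le> r" using lr[of i] lr[of j] sections ij k by simp_all
  then show ?thesis using lr[of k] ij k by simp
qed

lemma mpq_clique_within_position:
  assumes Q: "at_path T p (QNode qs)" and C: "C \<in> set (cliques T)"
  obtains i where "i < length qs" "C \<inter> tverts (QNode qs) \<subseteq> position_verts qs i"
proof -
  have "qs \<noteq> []"
    using Q mpq_no_empty_qnode unfolding no_empty_qnode_def by blast
  have disjoint: "tverts (QNode qs) \<inter> outside_verts T p = {}"
    using Q by (rule mpq_subtree_disjoint_outside)
  from clique_split_at_path[OF Q C] show ?thesis
  proof (elim disjE exE conjE bexE)
    fix A D assume "A \<subseteq> outside_verts T p" "D \<in> set (cliques (QNode qs))" "C = A \<union> D"
    moreover obtain i where "i < length qs" "D \<subseteq> position_verts qs i"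
      using clique_of_QNode_within_position[OF \<open>D \<in> _\<close>] .
    ultimately show ?thesis using that disjoint by blast
  next
    assume "C \<subseteq> outside_verts T p"
    then have "C \<inter> tverts (QNode qs) \<subseteq> position_verts qs 0" using disjoint by blast
    then show ?thesis using that \<open>qs \<noteq> []\<close> by blast
  qed
qed

lemma mpq_separated_pair:
  assumes "finite V" and Q: "at_path T p (QNode qs)" and i: "Suc i < length qs"
  obtains a b where "a \<in> position_verts qs i" "a \<notin> fst (qs ! Suc i)"
    "b \<in> position_verts qs (Suc i)" "b \<notin> fst (qs ! i)" "a \<noteq> b" "{a, b} \<notin> E"
proof -
  have "\<forall>m. 1 \<le> m \<and> m \<le> length qs - 1 \<longrightarrow>
      position_verts qs (m - 1) - fst (qs ! m) \<noteq> {} \<and> position_verts qs m - fst (qs ! (m - 1)) \<noteq> {}"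
    using mpq_qnode_ok[OF Q] unfolding qnode_ok_def Let_def position_verts_def by blast
  from this[rule_format, of "Suc i"]
  have "position_verts qs i - fst (qs ! Suc i) \<noteq> {} \<and> position_verts qs (Suc i) - fst (qs ! i) \<noteq> {}"
    using i by simp
  then obtain a b where a: "a \<in> position_verts qs i" "a \<notin> fst (qs ! Suc i)"
    and b: "b \<in> position_verts qs (Suc i)" "b \<notin> fst (qs ! i)"
    by blast
  have no_clique: False if C: "C \<in> set (cliques T)" "a \<in> C" "b \<in> C" for C
  proof -
    obtain m where m: "m < length qs" "C \<inter> tverts (QNode qs) \<subseteq> position_verts qs m"
      using mpq_clique_within_position[OF Q C(1)] .
    have "a \<in> tverts (QNode qs)" "b \<in> tverts (QNode qs)"
      using a(1) b(1) position_verts_subset_tverts i by (meson Suc_lessD subsetD)+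
    then have "a \<in> position_verts qs m" "b \<in> position_verts qs m"
      using m(2) C(2,3) by blast+
    then show False
      using mpq_position_verts_interval[OF Q _ _ a(1), of m "Suc i"]
        mpq_position_verts_interval[OF Q _ _ _ b(1), of m i] a(2) b(2) m(1) i
      by (cases "i < m") auto
  qed
  have "a \<noteq> b"
    using mpq_position_verts_interval[OF Q _ i a(1), of "Suc i"] a(2) b(1) by auto
  moreover have "{a, b} \<notin> E"
  proof
    assume "{a, b} \<in> E"
    moreover have "a \<in> V" "b \<in> V"
      using a(1) b(1) position_verts_subset_tverts i mpq_tverts_subset[OF Q] by (meson Suc_lessD subsetD)+
    ultimately show False
      using mpq_edge_in_clique[OF assms(1)] no_clique by blast
  qed
  ultimately show ?thesis using that a b by blast
qed

lemma mpq_clique_through_above: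
  assumes s: "at_path T p s" and M: "M \<in> set (cliques T)" "x \<in> M" "w \<in> M"
    and "x \<notin> tverts s" "w \<in> tverts s" "D \<in> set (cliques s)"
  obtains C where "C \<in> set (cliques T)" "x \<in> C" "D \<subseteq> C"
proof -
  have disjoint: "tverts s \<inter> outside_verts T p = {}"
    using s by (rule mpq_subtree_disjoint_outside)
  from clique_split_at_path[OF s M(1)] show ?thesis
  proof (elim disjE exE conjE bexE)
    fix A D0 assume "D0 \<in> set (cliques s)" "M = A \<union> D0"
      and ext: "\<forall>D' \<in> set (cliques s). A \<union> D' \<in> set (cliques T)"
    then have "x \<in> A" using cliques_subset_tverts M(2) \<open>x \<notin> tverts s\<close> by blast
    then show ?thesis using that ext \<open>D \<in> set (cliques s)\<close> by blast
  next
    assume "M \<subseteq> outside_verts T p"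
    then show ?thesis using disjoint M(3) \<open>w \<in> tverts s\<close> by blast
  qed
qed

lemma mpq_C4_through_qnode:
  assumes "finite V" and x: "vnode T x px" "strict_prefix px p"
    and Q: "at_path T p (QNode qs)" and y: "vnode T y p" and "{x, y} \<in> E"
  obtains a b where "{x, a} \<in> E" "{a, y} \<in> E" "{y, b} \<in> E" "{b, x} \<in> E"
    "{a, b} \<notin> E" "a \<noteq> b" "x \<noteq> y" "a \<notin> {x, y}" "b \<notin> {x, y}"
proof -
  have "y \<in> node_label (QNode qs)"
    using y Q at_path_unique unfolding vnode_def by blast
  then obtain l r where lr: "l < r" "r < length qs"
    "\<And>m. m < length qs \<Longrightarrow> y \<in> fst (qs ! m) \<longleftrightarrow> l \<le> m \<and> m \<le> r"
    using mpq_section_interval[OF Q] by blast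
  then have l: "Suc l < length qs" "y \<in> fst (qs ! l)" "y \<in> fst (qs ! Suc l)" by auto
  obtain a b where a: "a \<in> position_verts qs l" "a \<notin> fst (qs ! Suc l)"
    and b: "b \<in> position_verts qs (Suc l)" "b \<notin> fst (qs ! l)" and "a \<noteq> b" "{a, b} \<notin> E"
    using mpq_separated_pair[OF assms(1) Q l(1)] by blast
  have x_out: "x \<notin> tverts (QNode qs)"
    using mpq_above_not_in_subtree[OF x Q] .
  have y_in: "y \<in> tverts (QNode qs)"
    using node_label_subset_tverts[of "QNode qs"] \<open>y \<in> node_label _\<close> by (rule subsetD)
  have ab_in: "a \<in> tverts (QNode qs)" "b \<in> tverts (QNode qs)"
    using a(1) b(1) l(1) position_verts_subset_tverts by (meson Suc_lessD subsetD)+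
  obtain M where M: "M \<in> set (cliques T)" "x \<in> M" "y \<in> M"
    using mpq_edge_in_clique[OF assms(1) mpq_vnode_in_V[OF x(1)] mpq_vnode_in_V[OF y] \<open>{x, y} \<in> E\<close>] .
  have Q_ok: "no_empty_qnode (QNode qs)"
    using Q mpq_no_empty_qnode by (rule no_empty_qnode_at_path)
  obtain Da where Da: "Da \<in> set (cliques (QNode qs))" "fst (qs ! l) \<subseteq> Da" "a \<in> Da"
    using clique_of_QNode_through_position[OF Q_ok _ a(1)] l(1) by auto
  obtain Db where Db: "Db \<in> set (cliques (QNode qs))" "fst (qs ! Suc l) \<subseteq> Db" "b \<in> Db"
    using clique_of_QNode_through_position[OF Q_ok l(1) b(1)] by auto
  obtain Ca where Ca: "Ca \<in> set (cliques T)" "x \<in> Ca" "Da \<subseteq> Ca"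
    using mpq_clique_through_above[OF Q M x_out y_in Da(1)] .
  obtain Cb where Cb: "Cb \<in> set (cliques T)" "x \<in> Cb" "Db \<subseteq> Cb"
    using mpq_clique_through_above[OF Q M x_out y_in Db(1)] .
  have distinct: "x \<noteq> y" "a \<notin> {x, y}" "b \<notin> {x, y}"
    using x_out y_in ab_in a(2) b(2) l(2,3) by auto
  show ?thesis
  proof (rule that)
    show "{x, a} \<in> E" "{a, y} \<in> E"
      using mpq_clique_edge[OF Ca(1)] Ca Da l(2) distinct by blast+
    show "{y, b} \<in> E" "{b, x} \<in> E"
      using mpq_clique_edge[OF Cb(1)] Cb Db l(3) distinct by blast+
  qed fact+
qed

end

theorem mainTheorem9:
  fixes n :: nat and E :: "nat set set" and T :: "nat mpq"
    and x y :: nat and px py :: "nat list" and qs :: "(nat set \<times> nat mpq option) list"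
  assumes "interval_graph {1..n} E"
    and "mpq_tree_of {1..n} E T"
    and "{x, y} \<in> E"
    and "vnode T x px" and "vnode T y py"
    and "strict_prefix px py"
    and "at_path T py (QNode qs)"
  shows "\<not> interval_edge {1..n} E {x, y}"
proof
  assume "interval_edge {1..n} E {x, y}"
  then have G: "interval_graph {1..n} (E - {{x, y}})"
    by (simp add: interval_edge_def)
  obtain a b where "{x, a} \<in> E" "{a, y} \<in> E" "{y, b} \<in> E" "{b, x} \<in> E"
    "{a, b} \<notin> E" "a \<noteq> b" "x \<noteq> y" "a \<notin> {x, y}" "b \<notin> {x, y}"
    using mpq_C4_through_qnode[OF assms(2) finite_atLeastAtMost assms(4,6,7,5,3)] .
  then show False
    by (intro interval_graph_no_induced_C4[OF G, of x a y b]) (auto simp: doubleton_eq_iff)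
qed

end
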